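(* Let $\mathrm{Pol}=(\mathrm{Pol}_1,\mathrm{Pol}_2):\mathrm{SL}(2,\mathbb C)\to\mathrm{SL}(2,\mathbb C)^{++}\times\mathrm{SU}(2)$ be the polar decomposition $A=\mathrm{Pol}_1(A)\mathrm{Pol}_2(A)$. For all $A\in\mathrm{SL}(2,\mathbb C)$, $\|d\mathrm{Pol}_2(A)\|\le|A|$.
   Context: $\mathrm{SL}(2,\mathbb C)^{++}$ denotes the Hermitian positive definite elements of $\mathrm{SL}(2,\mathbb C)$. $|\cdot|$ is the Frobenius norm $|A|=(\sum_{i,j}|a_{ij}|^2)^{1/2}$ on $2\times2$ complex matrices (used on tangent spaces of $\mathrm{SL}(2,\mathbb C)$ and $\mathrm{SU}(2)$), and $\|d\mathrm{Pol}_2(A)\|$ is the corresponding operator norm of the differential. *)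

theory Defs
  imports "HOL-Analysis.Analysis"
begin

text \<open>2x2 complex matrices. The norm on complex^2^2 (norm_vec_def, iterated L2 norm of rows)
  is exactly the Frobenius norm.\<close>
type_synonym cmat = "complex^2^2"

definition cmat_adj :: "cmat \<Rightarrow> cmat" where
  "cmat_adj A = (\<chi> i j. cnj (A $ j $ i))"

definition SL2 :: "cmat set" where
  "SL2 = {A. det A = 1}"

definition hermitian_posdef :: "cmat \<Rightarrow> bool" where
  "hermitian_posdef P \<longleftrightarrow> cmat_adj P = P \<and>
     (\<forall>v::complex^2. v \<noteq> 0 \<longrightarrow> 0 < Re (\<Sum>i\<in>UNIV. cnj (v $ i) * (P *v v) $ i))"

definition SL2pp :: "cmat set" where
  "SL2pp = {P. det P = 1 \<and> hermitian_posdef P}"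

definition SU2 :: "cmat set" where
  "SU2 = {U. U ** cmat_adj U = mat 1 \<and> det U = 1}"

definition Pol :: "cmat \<Rightarrow> cmat \<times> cmat" where
  "Pol A = (THE (P, U). P \<in> SL2pp \<and> U \<in> SU2 \<and> A = P ** U)"

definition Pol1 :: "cmat \<Rightarrow> cmat" where "Pol1 A = fst (Pol A)"
definition Pol2 :: "cmat \<Rightarrow> cmat" where "Pol2 A = snd (Pol A)"

definition tangent_SL2 :: "cmat \<Rightarrow> cmat set" where
  "tangent_SL2 A = {X. \<exists>\<gamma>::real \<Rightarrow> cmat. \<gamma> 0 = A \<and> (\<forall>t. \<gamma> t \<in> SL2) \<and>
      (\<gamma> has_vector_derivative X) (at 0)}"

end

theory Submission
  imports Defs
begin

(* A positive definite P with det P = 1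
   satisfies P^2 + 1 = (tr P) P by Cayley-Hamilton; as P^2 = A A^* and tr (A A^* + 1) = |A|^2 + 2,
   this forces tr P = s := sqrt (|A|^2 + 2), so P = (A A^* + 1) / s and U = (A + A') / s, where
   A' = cnj_cofactor A is the inverse of A^*. Hence Pol2 is the restriction to SL(2,C) of a smooth
   map on all matrices, with differential X |-> (X + X')/s - (<A,X>/s^3) (A + A').
   A tangent vector X at A satisfies <X, A'> = 0 (the linearisation of det = 1), so
   |dPol2 X|^2 = |X + X'|^2/s^2 - 2 <A,X>^2/s^4 <= 4 |X|^2/s^2, which is at most |A|^2 |X|^2
   because |A|^2 >= <A, A'> = 2. *)

lemma num2_one_neq_two [simp]: "(1::2) \<noteq> 2" "(2::2) \<noteq> 1"
  by (simp_all add: exhaust_2)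

lemma cmat_eq_iff:
  "(A::cmat) = B \<longleftrightarrow> A$1$1 = B$1$1 \<and> A$1$2 = B$1$2 \<and> A$2$1 = B$2$1 \<and> A$2$2 = B$2$2"
  by (auto simp: vec_eq_iff forall_2)

lemma cmat_mult_nth [simp]: "((A::cmat) ** B)$i$j = A$i$1 * B$1$j + A$i$2 * B$2$j"
  by (simp add: matrix_matrix_mult_def sum_2)

lemma cmat_mult_vec_nth [simp]: "((A::cmat) *v v)$i = A$i$1 * v$1 + A$i$2 * v$2"
  by (simp add: matrix_vector_mult_def sum_2)

lemma cmat_adj_nth [simp]: "cmat_adj A $i$j = cnj (A$j$i)"
  by (simp add: cmat_adj_def)

lemma cmat_mat_nth [simp]: "(mat c :: cmat)$i$j = (if i = j then c else 0)"
  by (simp add: mat_def)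

lemma cmat_scaleR_nth [simp]: "((r::real) *\<^sub>R (A::cmat))$i$j = of_real r * A$i$j"
  by (simp only: vector_scaleR_component) (simp add: scaleR_conv_of_real)

lemma inner_cmat:
  "inner (A::cmat) B =
     inner (A$1$1) (B$1$1) + inner (A$1$2) (B$1$2) + inner (A$2$1) (B$2$1) + inner (A$2$2) (B$2$2)"
  by (simp add: inner_vec_def sum_2)

lemma trace_cmat: "trace (A::cmat) = A$1$1 + A$2$2"
  by (simp add: trace_def sum_2)

lemma norm_cmat_sq:
  "(norm (A::cmat))\<^sup>2 =
     (cmod (A$1$1))\<^sup>2 + (cmod (A$1$2))\<^sup>2 + (cmod (A$2$1))\<^sup>2 + (cmod (A$2$2))\<^sup>2"
  by (simp add: power2_norm_eq_inner inner_cmat)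

lemma norm_cmat_sq_complex:
  "complex_of_real ((norm (A::cmat))\<^sup>2) =
     A$1$1 * cnj (A$1$1) + A$1$2 * cnj (A$1$2) + A$2$1 * cnj (A$2$1) + A$2$2 * cnj (A$2$2)"
  unfolding norm_cmat_sq of_real_add complex_norm_square ..

lemma trace_mult_cmat_adj: "trace (A ** cmat_adj A) = of_real ((norm A)\<^sup>2)"
  by (simp add: trace_cmat norm_cmat_sq_complex add.assoc del: of_real_power)

definition cnj_cofactor :: "cmat \<Rightarrow> cmat" where
  "cnj_cofactor A = (\<chi> i j. if i = 1 then (if j = 1 then cnj (A$2$2) else - cnj (A$2$1))
                           else (if j = 1 then - cnj (A$1$2) else cnj (A$1$1)))"

lemma cnj_cofactor_nth [simp]:
  "cnj_cofactor A $1$1 = cnj (A$2$2)" "cnj_cofactor A $1$2 = - cnj (A$2$1)"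
  "cnj_cofactor A $2$1 = - cnj (A$1$2)" "cnj_cofactor A $2$2 = cnj (A$1$1)"
  by (simp_all add: cnj_cofactor_def)

lemma cnj_cofactor_cnj_cofactor [simp]: "cnj_cofactor (cnj_cofactor A) = A"
  by (simp add: cmat_eq_iff)

lemma bounded_linear_cnj_cofactor: "bounded_linear cnj_cofactor"
proof (rule bounded_linear_intro[where K = 1])
  show "cnj_cofactor (X + Y) = cnj_cofactor X + cnj_cofactor Y" for X Y
    by (simp add: cmat_eq_iff)
  show "cnj_cofactor (r *\<^sub>R X) = r *\<^sub>R cnj_cofactor X" for r X
    by (simp add: cmat_eq_iff)
  show "norm (cnj_cofactor X) \<le> norm X * 1" for X
    by (simp add: norm_eq_sqrt_inner inner_cmat inner_complex_def algebra_simps)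
qed

lemmas has_derivative_cnj_cofactor [derivative_intros] =
  bounded_linear.has_derivative[OF bounded_linear_cnj_cofactor]

lemma inner_cnj_cofactor_cnj_cofactor: "inner (cnj_cofactor X) (cnj_cofactor Y) = inner X Y"
  by (simp add: inner_cmat inner_complex_def algebra_simps)

lemma norm_cnj_cofactor: "norm (cnj_cofactor X) = norm X"
  by (simp add: norm_eq_sqrt_inner inner_cnj_cofactor_cnj_cofactor)

lemma inner_cnj_cofactor_commute: "inner (cnj_cofactor X) Y = inner X (cnj_cofactor Y)"
  by (simp add: inner_cmat inner_complex_def algebra_simps)

lemma inner_cnj_cofactor_self: "inner A (cnj_cofactor A) = 2 * Re (det A)"
  by (simp add: inner_cmat inner_complex_def algebra_simps det_2)

definition polar_scale :: "cmat \<Rightarrow> real" where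
  "polar_scale A = sqrt ((norm A)\<^sup>2 + 2)"

definition polar_pos :: "cmat \<Rightarrow> cmat" where
  "polar_pos A = inverse (polar_scale A) *\<^sub>R (A ** cmat_adj A + mat 1)"

definition polar_unitary :: "cmat \<Rightarrow> cmat" where
  "polar_unitary A = inverse (polar_scale A) *\<^sub>R (A + cnj_cofactor A)"

lemma polar_scale_pos: "0 < polar_scale A"
  by (simp add: polar_scale_def add_nonneg_pos)

lemma polar_scale_sq: "(polar_scale A)\<^sup>2 = (norm A)\<^sup>2 + 2"
  by (simp add: polar_scale_def add_nonneg_pos)

lemma inverse_polar_scale_sq:
  "inverse (polar_scale A) * inverse (polar_scale A) * (polar_scale A)\<^sup>2 = 1"
  using polar_scale_pos[of A] by (simp add: field_simps power2_eq_square)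

lemma
  assumes "det A = 1"
  shows polar_factors_mult:
      "(A ** cmat_adj A + mat 1) ** (A + cnj_cofactor A) = (polar_scale A)\<^sup>2 *\<^sub>R A"
    and polar_unitary_factor_mult_adj:
      "(A + cnj_cofactor A) ** cmat_adj (A + cnj_cofactor A) = (polar_scale A)\<^sup>2 *\<^sub>R mat 1"
    and det_polar_unitary_factor: "det (A + cnj_cofactor A) = of_real ((polar_scale A)\<^sup>2)"
    and det_polar_pos_factor: "det (A ** cmat_adj A + mat 1) = of_real ((polar_scale A)\<^sup>2)"
proof -
  have d: "A$1$1 * A$2$2 - A$1$2 * A$2$1 = 1"
    using assms by (simp add: det_2)
  then have d': "cnj (A$1$1) * cnj (A$2$2) - cnj (A$1$2) * cnj (A$2$1) = 1"
    by (metis complex_cnj_diff complex_cnj_mult complex_cnj_one)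
  have s: "complex_of_real ((polar_scale A)\<^sup>2) =
      A$1$1 * cnj (A$1$1) + A$1$2 * cnj (A$1$2) + A$2$1 * cnj (A$2$1) + A$2$2 * cnj (A$2$2) + 2"
    by (simp only: polar_scale_sq of_real_add norm_cmat_sq_complex) simp
  show "(A ** cmat_adj A + mat 1) ** (A + cnj_cofactor A) = (polar_scale A)\<^sup>2 *\<^sub>R A"
    unfolding cmat_eq_iff cmat_scaleR_nth s using d d' by simp algebra
  show "(A + cnj_cofactor A) ** cmat_adj (A + cnj_cofactor A) = (polar_scale A)\<^sup>2 *\<^sub>R mat 1"
    unfolding cmat_eq_iff cmat_scaleR_nth s using d d' by simp algebra
  show "det (A + cnj_cofactor A) = of_real ((polar_scale A)\<^sup>2)"
    unfolding det_2 s using d d' by simp algebra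
  show "det (A ** cmat_adj A + mat 1) = of_real ((polar_scale A)\<^sup>2)"
    unfolding det_2 s using d d' by simp algebra
qed

lemma det_scaleR_cmat: "det (r *\<^sub>R (M::cmat)) = of_real r * of_real r * det M"
  by (simp add: det_2 algebra_simps scaleR_conv_of_real[where 'a=complex])

lemma scaleR_cmat_mult_scaleR:
  "(r *\<^sub>R (M::cmat)) ** (q *\<^sub>R (N::cmat)) = (r * q) *\<^sub>R (M ** N)"
  unfolding cmat_eq_iff by (simp add: algebra_simps scaleR_conv_of_real[where 'a=complex])

lemma cmat_adj_scaleR: "cmat_adj (r *\<^sub>R M) = r *\<^sub>R cmat_adj M"
  by (simp add: cmat_eq_iff)

lemma cmat_adj_mult: "cmat_adj ((M::cmat) ** N) = cmat_adj N ** cmat_adj M"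
  by (simp add: cmat_eq_iff algebra_simps)

lemma polar_pos_mult_polar_unitary: "det A = 1 \<Longrightarrow> polar_pos A ** polar_unitary A = A"
  unfolding polar_pos_def polar_unitary_def scaleR_cmat_mult_scaleR
  by (simp add: polar_factors_mult) (simp add: inverse_polar_scale_sq)

lemma polar_unitary_SU2: "det A = 1 \<Longrightarrow> polar_unitary A \<in> SU2"
  unfolding SU2_def polar_unitary_def
  by (simp add: cmat_adj_scaleR scaleR_cmat_mult_scaleR det_scaleR_cmat
      polar_unitary_factor_mult_adj det_polar_unitary_factor)
     (simp add: inverse_polar_scale_sq flip: of_real_mult of_real_inverse of_real_power)

lemma polar_pos_SL2pp: "det A = 1 \<Longrightarrow> polar_pos A \<in> SL2pp"
proof -
  assume dA: "det A = 1"
  have det: "det (polar_pos A) = 1"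
    unfolding polar_pos_def det_scaleR_cmat det_polar_pos_factor[OF dA]
    by (simp add: inverse_polar_scale_sq flip: of_real_mult of_real_inverse of_real_power)
  have herm: "cmat_adj (polar_pos A) = polar_pos A"
    unfolding polar_pos_def cmat_adj_scaleR by (simp add: cmat_eq_iff mult.commute)
  have pos: "0 < Re (\<Sum>i\<in>UNIV. cnj (v$i) * (polar_pos A *v v)$i)" if "v \<noteq> 0" for v :: "complex^2"
  proof -
    define w where "w = cmat_adj A *v v"
    have form: "(\<Sum>i\<in>UNIV. cnj (v$i) * (polar_pos A *v v)$i) = of_real (inverse (polar_scale A) *
        ((cmod (w$1))\<^sup>2 + (cmod (w$2))\<^sup>2 + (cmod (v$1))\<^sup>2 + (cmod (v$2))\<^sup>2))"
      unfolding of_real_mult of_real_add complex_norm_square sum_2 polar_pos_def w_def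
      by (simp add: scaleR_conv_of_real[where 'a=complex]) algebra
    have "0 < (cmod (v$1))\<^sup>2 + (cmod (v$2))\<^sup>2"
      using that by (auto simp: vec_eq_iff forall_2 add_pos_nonneg add_nonneg_pos)
    then have "0 < inverse (polar_scale A) *
        ((cmod (w$1))\<^sup>2 + (cmod (w$2))\<^sup>2 + (cmod (v$1))\<^sup>2 + (cmod (v$2))\<^sup>2)"
      using polar_scale_pos[of A] by (intro mult_pos_pos) (simp, smt (verit) zero_le_power2)
    then show ?thesis
      unfolding form Re_complex_of_real .
  qed
  show ?thesis
    unfolding SL2pp_def hermitian_posdef_def using det herm pos by blast
qed

lemma SL2pp_trace_real_pos:
  assumes "P \<in> SL2pp"
  shows "trace P = of_real (Re (trace P))" and "0 < Re (trace P)"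
proof -
  have herm: "cmat_adj P = P"
    and pos: "\<And>v::complex^2. v \<noteq> 0 \<Longrightarrow> 0 < Re (\<Sum>i\<in>UNIV. cnj (v$i) * (P *v v)$i)"
    using assms unfolding SL2pp_def hermitian_posdef_def by auto
  have "Im (P$i$i) = 0" for i
    using arg_cong[OF herm, of "\<lambda>M. M$i$i"] by (simp add: complex_eq_iff)
  then show "trace P = of_real (Re (trace P))"
    by (simp add: trace_cmat complex_eq_iff)
  have "0 < Re (P$1$1)" "0 < Re (P$2$2)"
    using pos[of "axis 1 1"] pos[of "axis 2 1"] by (simp_all add: sum_2 axis_def vec_eq_iff forall_2)
  then show "0 < Re (trace P)"
    by (simp add: trace_cmat add_pos_pos)
qed

lemma cayley_hamilton_SL2:
  assumes "det (P::cmat) = 1" and "trace P = of_real t"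
  shows "P ** P + mat 1 = t *\<^sub>R P"
proof -
  have "P$1$1 * P$2$2 - P$1$2 * P$2$1 = 1" and "P$1$1 + P$2$2 = of_real t"
    using assms by (simp_all add: det_2 trace_cmat)
  then show ?thesis
    unfolding cmat_eq_iff by (simp add: scaleR_conv_of_real[where 'a=complex]) algebra
qed

lemma cmat_mult_left_cancel:
  assumes "det P \<noteq> 0" and "P ** U = P ** (V::cmat)"
  shows "U = V"
proof -
  obtain B :: cmat where "B ** P = mat 1"
    using assms(1) invertible_det_nz invertible_left_inverse by blast
  then show ?thesis
    by (metis assms(2) matrix_mul_assoc matrix_mul_lid)
qed

lemma polar_decomposition_unique:
  assumes P: "P \<in> SL2pp" and U: "U \<in> SU2" and A: "A = P ** U"
  shows "P = polar_pos A" and "U = polar_unitary A"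
proof -
  have det_P: "det P = 1" and herm: "cmat_adj P = P"
    using P by (simp_all add: SL2pp_def hermitian_posdef_def)
  have unitary: "U ** cmat_adj U = mat 1" and "det U = 1"
    using U by (simp_all add: SU2_def)
  then have det_A: "det A = 1"
    using A det_P by (simp add: det_mul)
  have AA: "A ** cmat_adj A = P ** P"
    unfolding A cmat_adj_mult herm by (metis matrix_mul_assoc unitary matrix_mul_rid)
  define t where "t = Re (trace P)"
  have tr: "trace P = of_real t" and "0 < t"
    using SL2pp_trace_real_pos[OF P] by (simp_all add: t_def)
  have CH: "A ** cmat_adj A + mat 1 = t *\<^sub>R P"
    unfolding AA using cayley_hamilton_SL2[OF det_P tr] .
  have "complex_of_real ((polar_scale A)\<^sup>2) = trace (A ** cmat_adj A + mat 1)"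
    by (simp add: polar_scale_sq trace_add trace_mult_cmat_adj trace_I del: of_real_power)
  also have "\<dots> = of_real (t\<^sup>2)"
    unfolding CH
    by (simp add: trace_cmat tr[unfolded trace_cmat] power2_eq_square
        scaleR_conv_of_real[where 'a=complex] flip: distrib_left)
  finally have "(polar_scale A)\<^sup>2 = t\<^sup>2"
    by (simp only: of_real_eq_iff)
  then have "polar_scale A = t"
    using polar_scale_pos[of A] \<open>0 < t\<close> by simp
  then show P_eq: "P = polar_pos A"
    unfolding polar_pos_def CH using \<open>0 < t\<close> by simp
  have "P ** U = polar_pos A ** polar_unitary A"
    using A polar_pos_mult_polar_unitary[OF det_A] by (rule trans[OF sym sym])
  then have "P ** U = P ** polar_unitary A"
    unfolding P_eq[symmetric] .
  then show "U = polar_unitary A"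
    by (rule cmat_mult_left_cancel[rotated]) (simp add: det_P)
qed

lemma Pol_SL2:
  assumes "A \<in> SL2"
  shows "Pol A = (polar_pos A, polar_unitary A)"
  unfolding Pol_def
proof (rule the_equality)
  have "det A = 1"
    using assms by (simp add: SL2_def)
  then show
    "case (polar_pos A, polar_unitary A) of (P, U) \<Rightarrow> P \<in> SL2pp \<and> U \<in> SU2 \<and> A = P ** U"
    by (simp add: polar_pos_SL2pp polar_unitary_SU2 polar_pos_mult_polar_unitary)
  show "PU = (polar_pos A, polar_unitary A)"
    if "case PU of (P, U) \<Rightarrow> P \<in> SL2pp \<and> U \<in> SU2 \<and> A = P ** U" for PU
    using that polar_decomposition_unique by (cases PU) blast
qed

definition polar_unitary_deriv :: "cmat \<Rightarrow> cmat \<Rightarrow> cmat" where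
  "polar_unitary_deriv A X = inverse (polar_scale A) *\<^sub>R (X + cnj_cofactor X)
     - (inner A X / (polar_scale A)^3) *\<^sub>R (A + cnj_cofactor A)"

lemma has_derivative_polar_scale:
  "(polar_scale has_derivative (\<lambda>X. inner A X / polar_scale A)) (at A)"
proof -
  have scale_eq: "polar_scale = (\<lambda>B. sqrt (inner B B + 2))"
    unfolding polar_scale_def[abs_def] power2_norm_eq_inner ..
  have "((\<lambda>B. inner B B + 2) has_derivative (\<lambda>X. 2 * inner A X)) (at A)"
    by (auto intro!: derivative_eq_intros simp: inner_commute)
  from DERIV_compose_FDERIV[OF DERIV_real_sqrt this]
  have "((\<lambda>B. sqrt (inner B B + 2)) has_derivative
      (\<lambda>X. 2 * inner A X * (inverse (sqrt (inner A A + 2)) / 2))) (at A)"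
    by (simp add: add_nonneg_pos)
  then show ?thesis
    unfolding scale_eq by (rule has_derivative_eq_rhs) (simp add: fun_eq_iff field_simps)
qed

lemma has_derivative_polar_unitary: "(polar_unitary has_derivative polar_unitary_deriv A) (at A)"
proof -
  have "((\<lambda>B. inverse (polar_scale B)) has_derivative (\<lambda>X. - (inner A X / (polar_scale A)^3))) (at A)"
    using has_derivative_polar_scale polar_scale_pos[of A]
    by (auto intro!: derivative_eq_intros simp: power3_eq_cube divide_inverse)
  from has_derivative_scaleR[OF this has_derivative_add[OF has_derivative_ident
        has_derivative_cnj_cofactor[OF has_derivative_ident]]]
  show ?thesis
    unfolding polar_unitary_def[abs_def] polar_unitary_deriv_def[abs_def]
    by (simp add: algebra_simps)
qed

lemma has_derivative_along_curve_unique: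
  fixes \<gamma> :: "real \<Rightarrow> 'a::real_normed_vector" and f :: "'a \<Rightarrow> 'b::real_normed_vector"
  assumes "(f has_derivative L) (at (\<gamma> 0) within S)" and "(f has_derivative L') (at (\<gamma> 0) within S)"
    and "\<And>t. \<gamma> t \<in> S" and "(\<gamma> has_vector_derivative v) (at 0)"
  shows "L v = L' v"
proof -
  have "range \<gamma> \<subseteq> S"
    using assms(3) by auto
  have "((f \<circ> \<gamma>) has_derivative L \<circ> (\<lambda>h. h *\<^sub>R v)) (at 0)"
    and "((f \<circ> \<gamma>) has_derivative L' \<circ> (\<lambda>h. h *\<^sub>R v)) (at 0)"
    using assms(1,2)[THEN has_derivative_subset, OF \<open>range \<gamma> \<subseteq> S\<close>] assms(4)
    by (auto intro: diff_chain_within simp: has_vector_derivative_def)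
  from has_derivative_unique[OF this] show ?thesis
    by (metis comp_apply scaleR_one)
qed

lemma has_derivative_det_cmat:
  fixes A :: cmat
  shows "(det has_derivative
      (\<lambda>X. A$1$1 * X$2$2 + X$1$1 * A$2$2 - A$1$2 * X$2$1 - X$1$2 * A$2$1)) (at A)"
proof -
  have nth: "((\<lambda>M::cmat. M$i$j) has_derivative (\<lambda>X. X$i$j)) F" for i j F
    using bounded_linear_compose[OF bounded_linear_vec_nth[of j] bounded_linear_vec_nth[of i]]
    by (rule bounded_linear_imp_has_derivative)
  have "((\<lambda>M::cmat. M$1$1 * M$2$2 - M$1$2 * M$2$1) has_derivative
      (\<lambda>X. A$1$1 * X$2$2 + X$1$1 * A$2$2 - A$1$2 * X$2$1 - X$1$2 * A$2$1)) (at A)"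
    by (auto intro!: derivative_eq_intros nth simp: algebra_simps)
  moreover have "det = (\<lambda>M::cmat. M$1$1 * M$2$2 - M$1$2 * M$2$1)"
    by (simp add: fun_eq_iff det_2)
  ultimately show ?thesis
    by simp
qed

lemma tangent_SL2_orthogonal_cnj_cofactor:
  assumes "X \<in> tangent_SL2 A"
  shows "inner X (cnj_cofactor A) = 0"
proof -
  obtain \<gamma> where "\<gamma> 0 = A" and curve: "\<And>t. \<gamma> t \<in> SL2"
    and "(\<gamma> has_vector_derivative X) (at 0)"
    using assms unfolding tangent_SL2_def by blast
  moreover have "A \<in> SL2"
    using \<open>\<gamma> 0 = A\<close> curve by blast
  then have "(det has_derivative (\<lambda>_. 0)) (at A within SL2)"
    by (rule has_derivative_transform) (auto simp: SL2_def)
  ultimately have "X$1$1 * A$2$2 + A$1$1 * X$2$2 - X$1$2 * A$2$1 - A$1$2 * X$2$1 = 0"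
    using has_derivative_along_curve_unique[OF has_derivative_at_withinI[OF has_derivative_det_cmat]]
    by (fastforce simp: algebra_simps)
  then have "Re (X$1$1 * A$2$2 + A$1$1 * X$2$2 - X$1$2 * A$2$1 - A$1$2 * X$2$1) = 0"
    by simp
  then show ?thesis
    by (simp add: inner_cmat inner_complex_def algebra_simps)
qed

lemma two_le_norm_sq_SL2:
  assumes "det (A::cmat) = 1"
  shows "2 \<le> (norm A)\<^sup>2"
proof -
  have "2 = inner A (cnj_cofactor A)"
    using assms by (simp add: inner_cnj_cofactor_self)
  also have "\<dots> \<le> norm A * norm (cnj_cofactor A)"
    by (rule norm_cauchy_schwarz)
  finally show ?thesis
    by (simp add: norm_cnj_cofactor power2_eq_square)
qed

lemma norm_polar_unitary_deriv_le:
  assumes "det A = 1" and orth: "inner X (cnj_cofactor A) = 0"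
  shows "norm (polar_unitary_deriv A X) \<le> norm A * norm X"
proof -
  define s where "s = polar_scale A"
  define u where "u = X + cnj_cofactor X"
  define v where "v = A + cnj_cofactor A"
  have "0 < s"
    by (simp add: s_def polar_scale_pos)
  have "inner A (cnj_cofactor X) = 0"
    using orth by (metis inner_cnj_cofactor_commute inner_commute)
  then have uv: "inner u v = 2 * inner A X"
    using orth unfolding u_def v_def
    by (simp add: inner_add_left inner_add_right inner_cnj_cofactor_commute
        inner_cnj_cofactor_cnj_cofactor inner_commute)
  have vv: "inner v v = 2 * s\<^sup>2"
    using assms(1) unfolding v_def s_def polar_scale_sq
    by (simp add: inner_add_left inner_add_right inner_cnj_cofactor_commute
        inner_cnj_cofactor_cnj_cofactor inner_cnj_cofactor_self power2_norm_eq_inner)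
  have uu: "inner u u \<le> 4 * (norm X)\<^sup>2"
    using norm_cauchy_schwarz[of X "cnj_cofactor X", unfolded norm_cnj_cofactor,
        folded power2_eq_square]
    unfolding u_def
    by (simp add: inner_add_left inner_add_right inner_cnj_cofactor_commute
        inner_cnj_cofactor_cnj_cofactor norm_cnj_cofactor power2_norm_eq_inner)
  have "(norm (polar_unitary_deriv A X))\<^sup>2
      = inner u u / s\<^sup>2 - 2 * (inner A X / s^3) * inner u v / s + (inner A X / s^3)\<^sup>2 * inner v v"
    unfolding polar_unitary_deriv_def power2_norm_eq_inner
      s_def[symmetric] u_def[symmetric] v_def[symmetric]
    by (simp add: inner_diff_left inner_diff_right inner_commute[of v u] power2_eq_square
        divide_inverse algebra_simps)
  also have "\<dots> = inner u u / s\<^sup>2 - 2 * (inner A X)\<^sup>2 / s^4"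
    unfolding uv vv using \<open>0 < s\<close>
    by (simp add: field_simps power2_eq_square power3_eq_cube power4_eq_xxxx)
  also have "\<dots> \<le> 4 * (norm X)\<^sup>2 / s\<^sup>2"
  proof -
    have "0 \<le> 2 * (inner A X)\<^sup>2 / s^4"
      by simp
    then show ?thesis
      using divide_right_mono[OF uu zero_le_power2[of s]] by linarith
  qed
  also have "\<dots> \<le> (norm A)\<^sup>2 * (norm X)\<^sup>2"
  proof -
    have "2 \<le> (norm A)\<^sup>2"
      using assms(1) by (rule two_le_norm_sq_SL2)
    have "4 \<le> (norm A)\<^sup>2 * s\<^sup>2"
      using mult_mono[OF \<open>2 \<le> (norm A)\<^sup>2\<close>, of 2 "(norm A)\<^sup>2 + 2"]
      unfolding s_def polar_scale_sq by simp
    then have "4 / s\<^sup>2 \<le> (norm A)\<^sup>2"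
      using \<open>0 < s\<close> by (simp add: divide_le_eq)
    then show ?thesis
      using mult_right_mono[of "4 / s\<^sup>2" "(norm A)\<^sup>2" "(norm X)\<^sup>2"] by simp
  qed
  also have "\<dots> = (norm A * norm X)\<^sup>2"
    by (simp add: power_mult_distrib)
  finally show ?thesis
    by (rule power2_le_imp_le) simp
qed

theorem proposition13:
  fixes A :: cmat
  assumes "A \<in> SL2"
  shows "Pol2 differentiable (at A within SL2) \<and>
    (\<forall>L. (Pol2 has_derivative L) (at A within SL2) \<longrightarrow>
       (\<forall>X\<in>tangent_SL2 A. norm (L X) \<le> norm A * norm X))"
proof -
  have Pol2_eq: "Pol2 B = polar_unitary B" if "B \<in> SL2" for B
    using that by (simp add: Pol2_def Pol_SL2)
  have deriv: "(Pol2 has_derivative polar_unitary_deriv A) (at A within SL2)"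
    using assms Pol2_eq has_derivative_at_withinI[OF has_derivative_polar_unitary]
    by (rule has_derivative_transform)
  have unique: "L X = polar_unitary_deriv A X"
    if "(Pol2 has_derivative L) (at A within SL2)" and "X \<in> tangent_SL2 A" for L X
  proof -
    obtain \<gamma> where "\<gamma> 0 = A" and "\<And>t. \<gamma> t \<in> SL2"
      and "(\<gamma> has_vector_derivative X) (at 0)"
      using \<open>X \<in> tangent_SL2 A\<close> unfolding tangent_SL2_def by blast
    with that(1) deriv show ?thesis
      using has_derivative_along_curve_unique by metis
  qed
  have "det A = 1"
    using assms by (simp add: SL2_def)
  show ?thesis
  proof (intro conjI allI impI ballI)
    show "Pol2 differentiable (at A within SL2)"
      using deriv by (auto simp: differentiable_def)
    fix L X
    assume "(Pol2 has_derivative L) (at A within SL2)" and "X \<in> tangent_SL2 A"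
    then show "norm (L X) \<le> norm A * norm X"
      using unique
        norm_polar_unitary_deriv_le[OF \<open>det A = 1\<close> tangent_SL2_orthogonal_cnj_cofactor]
      by metis
  qed
qed

end
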